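(* Let $n\ge1$ and let $\wp\in \mathrm{C}^{0,n+1}$ be a primitive idempotent, $E:=\mathrm{C}^{0,n+1}\wp$. Then $P_n:=\ker(\Phi: A_n\otimes_\mathbb{R} E\to A_n\otimes_\mathbb{R} E)$ is a finitely generated projective $A_n$-module and the restriction of the symmetric bilinear form $\hat\beta$ to $P_n$ is non-degenerate.
   Context: $A_n:=\mathbb{R}[x_0,\dots,x_n]/(\sum_i x_i^2-1)$. $\mathrm{C}^{0,n+1}$ is the real Clifford algebra generated by $e_0,\dots,e_n$ with $e_i^2=1$ and $e_ie_j=-e_je_i$ for $i\ne j$. $\Phi$ is the $A_n$-linear map $\Phi(a\otimes u)=\tfrac12\big(\sum_{i=0}^n x_ia\otimes e_iu + a\otimes u\big)$, i.e. left multiplication by $\tfrac12(\mathbf{x}+1)$ with $\mathbf{x}=\sum_i x_i\otimes e_i$ (it preserves $A_n\otimes E$). $\sigma$ is the canonical (reversing) involution of $\mathrm{C}^{0,n+1}$ ($\sigma(e_i)=e_i$, $\sigma(xy)=\sigma(y)\sigma(x)$), $\beta(x,y)=\operatorname{Tr}(\sigma(x)y)$ is the trace form on $\mathrm{C}^{0,n+1}$ (Tr the trace of left multiplication), and $\hat\beta(a\otimes x,b\otimes y):=ab\,\beta(x,y)$ on $A_n\otimes_\mathbb{R} E$. *)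

theory Defs
  imports "HOL-Analysis.Analysis"
begin

type_synonym pt = "nat \<Rightarrow> real"          (* points of R^{n+1}: coordinates x_0..x_n, zero beyond n *)
type_synonym cl = "nat set \<Rightarrow> real"      (* element of C^{0,n+1}: coefficient of e_S, S \<subseteq> {0..n} *)
type_synonym ael = "pt \<Rightarrow> real"          (* element of A_n, as function on the sphere S^n *)
type_synonym aeel = "pt \<Rightarrow> cl"           (* element of A_n \<otimes> C^{0,n+1}, as Clifford-valued function *)

section \<open>The ring A_n = R[x_0..x_n]/(sum x_i^2 - 1), realised as the coordinate ring of S^n\<close>

definition sphere_pts :: "nat \<Rightarrow> pt set" where
  "sphere_pts n = {x. (\<forall>i>n. x i = 0) \<and> (\<Sum>i\<le>n. (x i)^2) = 1}"

inductive_set polyfun :: "nat \<Rightarrow> (pt \<Rightarrow> real) set" for n :: nat where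
  pf_const: "(\<lambda>x. c) \<in> polyfun n"
| pf_var: "i \<le> n \<Longrightarrow> (\<lambda>x. x i) \<in> polyfun n"
| pf_add: "p \<in> polyfun n \<Longrightarrow> q \<in> polyfun n \<Longrightarrow> (\<lambda>x. p x + q x) \<in> polyfun n"
| pf_mult: "p \<in> polyfun n \<Longrightarrow> q \<in> polyfun n \<Longrightarrow> (\<lambda>x. p x * q x) \<in> polyfun n"

definition An :: "nat \<Rightarrow> ael set" where
  "An n = {f. \<exists>p\<in>polyfun n. \<forall>x. f x = (if x \<in> sphere_pts n then p x else 0)}"

definition cl_elems :: "nat \<Rightarrow> cl set" where
  "cl_elems n = {u. \<forall>S. \<not> S \<subseteq> {..n} \<longrightarrow> u S = 0}"

definition cl_sign :: "nat set \<Rightarrow> nat set \<Rightarrow> real" where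
  "cl_sign S T = (-1) ^ card {(i, j). i \<in> S \<and> j \<in> T \<and> j < i}"

text \<open>e_S e_T = cl_sign S T e_{S symmetric-difference T}, using e_i^2 = 1, e_i e_j = - e_j e_i.\<close>
definition cl_mult :: "nat \<Rightarrow> cl \<Rightarrow> cl \<Rightarrow> cl" where
  "cl_mult n u v = (\<lambda>U. \<Sum>S\<in>Pow {..n}. \<Sum>T\<in>Pow {..n}.
       if (S - T) \<union> (T - S) = U then cl_sign S T * u S * v T else 0)"

definition cl_add :: "cl \<Rightarrow> cl \<Rightarrow> cl" where
  "cl_add u v = (\<lambda>S. u S + v S)"

definition cl_basis :: "nat set \<Rightarrow> cl" where
  "cl_basis S = (\<lambda>U. if U = S then 1 else 0)"

definition cl_rev :: "cl \<Rightarrow> cl" where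
  "cl_rev u = (\<lambda>S. (-1) ^ (card S * (card S - 1) div 2) * u S)"

definition cl_tr :: "nat \<Rightarrow> cl \<Rightarrow> real" where
  "cl_tr n w = (\<Sum>S\<in>Pow {..n}. cl_mult n w (cl_basis S) S)"

definition cl_beta :: "nat \<Rightarrow> cl \<Rightarrow> cl \<Rightarrow> real" where
  "cl_beta n u v = cl_tr n (cl_mult n (cl_rev u) v)"

definition cl_idempotent :: "nat \<Rightarrow> cl \<Rightarrow> bool" where
  "cl_idempotent n e \<longleftrightarrow> e \<in> cl_elems n \<and> cl_mult n e e = e"

definition primitive_idempotent :: "nat \<Rightarrow> cl \<Rightarrow> bool" where
  "primitive_idempotent n e \<longleftrightarrow> cl_idempotent n e \<and> e \<noteq> (\<lambda>S. 0) \<and>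
     \<not> (\<exists>a b. cl_idempotent n a \<and> cl_idempotent n b \<and> a \<noteq> (\<lambda>S. 0) \<and> b \<noteq> (\<lambda>S. 0) \<and>
            cl_mult n a b = (\<lambda>S. 0) \<and> cl_mult n b a = (\<lambda>S. 0) \<and> e = cl_add a b)"

definition cl_E :: "nat \<Rightarrow> cl \<Rightarrow> cl set" where
  "cl_E n e = {cl_mult n u e | u. u \<in> cl_elems n}"

definition AEmod :: "nat \<Rightarrow> cl \<Rightarrow> aeel set" where
  "AEmod n e = {F. (\<forall>x. x \<notin> sphere_pts n \<longrightarrow> F x = (\<lambda>S. 0)) \<and>
                (\<forall>S. (\<lambda>x. F x S) \<in> An n) \<and> (\<forall>x. F x \<in> cl_E n e)}"

definition ae_add :: "aeel \<Rightarrow> aeel \<Rightarrow> aeel" where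
  "ae_add F G = (\<lambda>x S. F x S + G x S)"

definition ae_smul :: "ael \<Rightarrow> aeel \<Rightarrow> aeel" where
  "ae_smul a F = (\<lambda>x S. a x * F x S)"

definition cl_xvec :: "nat \<Rightarrow> pt \<Rightarrow> cl" where
  "cl_xvec n x = (\<lambda>U. \<Sum>i\<le>n. x i * cl_basis {i} U)"

definition Phi :: "nat \<Rightarrow> aeel \<Rightarrow> aeel" where
  "Phi n F = (\<lambda>x S. (1/2) * (cl_mult n (cl_xvec n x) (F x) S + F x S))"

definition Pn :: "nat \<Rightarrow> cl \<Rightarrow> aeel set" where
  "Pn n e = {F \<in> AEmod n e. Phi n F = (\<lambda>x S. 0)}"

definition beta_hat :: "nat \<Rightarrow> aeel \<Rightarrow> aeel \<Rightarrow> ael" where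
  "beta_hat n F G = (\<lambda>x. cl_beta n (F x) (G x))"

definition free_mod :: "nat \<Rightarrow> nat \<Rightarrow> (nat \<Rightarrow> ael) set" where
  "free_mod n m = {v. (\<forall>k<m. v k \<in> An n) \<and> (\<forall>k\<ge>m. v k = (\<lambda>x. 0))}"

definition fv_add :: "(nat \<Rightarrow> ael) \<Rightarrow> (nat \<Rightarrow> ael) \<Rightarrow> (nat \<Rightarrow> ael)" where
  "fv_add v w = (\<lambda>k x. v k x + w k x)"

definition fv_smul :: "ael \<Rightarrow> (nat \<Rightarrow> ael) \<Rightarrow> (nat \<Rightarrow> ael)" where
  "fv_smul a v = (\<lambda>k x. a x * v k x)"

definition An_submodule :: "nat \<Rightarrow> cl \<Rightarrow> aeel set \<Rightarrow> bool" where
  "An_submodule n e P \<longleftrightarrow> P \<subseteq> AEmod n e \<and> (\<lambda>x S. 0) \<in> P \<and>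
     (\<forall>F\<in>P. \<forall>G\<in>P. ae_add F G \<in> P) \<and> (\<forall>a\<in>An n. \<forall>F\<in>P. ae_smul a F \<in> P)"

text \<open>finitely generated projective = direct summand (retract) of a finite free module A_n^m\<close>
definition fg_projective :: "nat \<Rightarrow> cl \<Rightarrow> aeel set \<Rightarrow> bool" where
  "fg_projective n e P \<longleftrightarrow> An_submodule n e P \<and>
     (\<exists>m (i :: aeel \<Rightarrow> nat \<Rightarrow> ael) (r :: (nat \<Rightarrow> ael) \<Rightarrow> aeel).
        (\<forall>F\<in>P. i F \<in> free_mod n m) \<and>
        (\<forall>F\<in>P. \<forall>G\<in>P. i (ae_add F G) = fv_add (i F) (i G)) \<and>
        (\<forall>a\<in>An n. \<forall>F\<in>P. i (ae_smul a F) = fv_smul a (i F)) \<and>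
        (\<forall>v\<in>free_mod n m. r v \<in> P) \<and>
        (\<forall>v\<in>free_mod n m. \<forall>w\<in>free_mod n m. r (fv_add v w) = ae_add (r v) (r w)) \<and>
        (\<forall>a\<in>An n. \<forall>v\<in>free_mod n m. r (fv_smul a v) = ae_smul a (r v)) \<and>
        (\<forall>F\<in>P. r (i F) = F))"

definition An_linear_form :: "nat \<Rightarrow> aeel set \<Rightarrow> (aeel \<Rightarrow> ael) \<Rightarrow> bool" where
  "An_linear_form n P \<phi> \<longleftrightarrow> (\<forall>F\<in>P. \<phi> F \<in> An n) \<and>
     (\<forall>F\<in>P. \<forall>G\<in>P. \<phi> (ae_add F G) = (\<lambda>x. \<phi> F x + \<phi> G x)) \<and>
     (\<forall>a\<in>An n. \<forall>F\<in>P. \<phi> (ae_smul a F) = (\<lambda>x. a x * \<phi> F x))"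

text \<open>non-degenerate: the adjoint P \<rightarrow> Hom_{A_n}(P, A_n), F \<mapsto> B(F,-), is bijective\<close>
definition nondegenerate_on :: "nat \<Rightarrow> aeel set \<Rightarrow> (aeel \<Rightarrow> aeel \<Rightarrow> ael) \<Rightarrow> bool" where
  "nondegenerate_on n P B \<longleftrightarrow>
     (\<forall>\<phi>. An_linear_form n P \<phi> \<longrightarrow> (\<exists>!F. F \<in> P \<and> (\<forall>G\<in>P. B F G = \<phi> G)))"

end

(* The trace form is beta = 2^(n+1) <.,.>, where <u,v> = sum_S u_S v_S is the coordinate
   inner product in the basis e_S: only e_{} has nonzero trace, and sigma(e_S) e_S = 1.
   On the sphere, left multiplication by x = sum_i x_i e_i is a <.,.>-self-adjoint involution,
   so P_n consists of the E-valued F with x F = -F, and h_x(w) = (w - x w)/2 is the orthogonal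
   projection onto that eigenspace, depending polynomially on x.  Since
   F(x) = F(x) p = sum_S F(x)_S e_S p, the sections B_S = h_x(e_S p) generate P_n with
   coordinates F_S, which exhibits P_n as a retract of A_n^(2^(n+1)).  Hence a linear form
   phi on P_n is phi(G) = sum_S G_S phi(B_S), and it is represented by
   F = h_x(sum_S phi(B_S) pi_S) / 2^(n+1), where pi_S in E represents u |-> u_S on E
   (the orthogonal projection of e_S onto E); F is unique because <.,.> is positive definite. *)

theory Submission
  imports Defs
begin

abbreviation symdiff :: "'a set \<Rightarrow> 'a set \<Rightarrow> 'a set" where
  "symdiff S T \<equiv> (S - T) \<union> (T - S)"

definition inversions :: "nat set \<Rightarrow> nat set \<Rightarrow> (nat \<times> nat) set" where
  "inversions S T = {(i, j). i \<in> S \<and> j \<in> T \<and> j < i}"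

lemma cl_sign_eq_inversions: "cl_sign S T = (-1) ^ card (inversions S T)"
  by (simp add: cl_sign_def inversions_def)

lemma finite_inversions: "finite S \<Longrightarrow> finite T \<Longrightarrow> finite (inversions S T)"
  by (rule finite_subset[of _ "S \<times> T"]) (auto simp: inversions_def)

lemma minus_one_power_card_symdiff:
  assumes "finite X" "finite Y"
  shows "(-1::real) ^ card (symdiff X Y) = (-1) ^ card X * (-1) ^ card Y"
proof -
  have u: "X \<union> Y = symdiff X Y \<union> (X \<inter> Y)" by blast
  have "card (X \<union> Y) = card (symdiff X Y) + card (X \<inter> Y)"
    unfolding u by (rule card_Un_disjoint) (use assms in auto)
  moreover have "card X + card Y = card (X \<union> Y) + card (X \<inter> Y)"
    using card_Un_Int[OF assms] by simp
  ultimately have "card X + card Y = card (symdiff X Y) + 2 * card (X \<inter> Y)" by simp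
  then have "(-1::real) ^ (card X + card Y) = (-1) ^ (card (symdiff X Y) + 2 * card (X \<inter> Y))"
    by simp
  then show ?thesis by (simp add: power_add power_mult)
qed

lemma cl_sign_symdiff_left:
  assumes "finite A" "finite B" "finite C"
  shows "cl_sign (symdiff A B) C = cl_sign A C * cl_sign B C"
proof -
  have "inversions (symdiff A B) C = symdiff (inversions A C) (inversions B C)"
    by (auto simp: inversions_def)
  then show ?thesis
    using minus_one_power_card_symdiff[OF finite_inversions finite_inversions] assms
    by (simp add: cl_sign_eq_inversions)
qed

lemma cl_sign_symdiff_right:
  assumes "finite A" "finite B" "finite C"
  shows "cl_sign A (symdiff B C) = cl_sign A B * cl_sign A C"
proof -
  have "inversions A (symdiff B C) = symdiff (inversions A B) (inversions A C)"
    by (auto simp: inversions_def)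
  then show ?thesis
    using minus_one_power_card_symdiff[OF finite_inversions finite_inversions] assms
    by (simp add: cl_sign_eq_inversions)
qed

lemma cl_sign_square: "cl_sign S T * cl_sign S T = 1"
  by (simp add: cl_sign_def flip: power_add mult_2)

text \<open>Both sides equal sign(S,T) sign(S,C) sign(T,C) with C = T \<triangle> (S \<triangle> U).\<close>
lemma cl_sign_cocycle:
  assumes "finite S" "finite T" "finite U"
  shows "cl_sign (symdiff S T) (symdiff (symdiff S T) U) * cl_sign S T
       = cl_sign S (symdiff S U) * cl_sign T (symdiff T (symdiff S U))"
proof -
  define C where "C = symdiff T (symdiff S U)"
  have "symdiff (symdiff S T) U = C" "symdiff S U = symdiff T C"
    unfolding C_def by blast+
  moreover have "finite C" using assms unfolding C_def by auto
  ultimately show ?thesis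
    using assms by (simp add: cl_sign_symdiff_left cl_sign_symdiff_right cl_sign_square)
qed

lemma finite_of_Pow_atMost: "S \<in> Pow {..n::nat} \<Longrightarrow> finite S"
  using finite_subset by blast

lemma symdiff_in_Pow: "S \<in> Pow A \<Longrightarrow> T \<in> Pow A \<Longrightarrow> symdiff S T \<in> Pow A"
  by auto

lemma symdiff_symdiff_cancel [simp]: "symdiff S (symdiff S T) = T"
  by blast

lemma sum_Pow_symdiff_reindex:
  assumes "S \<in> Pow X"
  shows "(\<Sum>A\<in>Pow X. g A) = (\<Sum>T\<in>Pow X. g (symdiff S T))"
  by (rule sum.reindex_bij_witness[where i = "symdiff S" and j = "symdiff S"]) (use assms in auto)

lemma cl_mult_eq:
  "cl_mult n u v U = (if U \<in> Pow {..n}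
     then \<Sum>S\<in>Pow {..n}. cl_sign S (symdiff S U) * u S * v (symdiff S U) else 0)"
proof -
  have inner: "(\<Sum>T\<in>Pow {..n}. if symdiff S T = U then cl_sign S T * u S * v T else 0)
      = (if symdiff S U \<in> Pow {..n} then cl_sign S (symdiff S U) * u S * v (symdiff S U) else 0)"
    for S
  proof -
    have "(\<Sum>T\<in>Pow {..n}. if symdiff S T = U then cl_sign S T * u S * v T else 0)
        = (\<Sum>T\<in>Pow {..n}. if T = symdiff S U then cl_sign S T * u S * v T else 0)"
      by (rule sum.cong) auto
    then show ?thesis by (simp del: Pow_iff)
  qed
  show ?thesis
  proof (cases "U \<in> Pow {..n}")
    case True
    then have "\<forall>S\<in>Pow {..n}. symdiff S U \<in> Pow {..n}" by auto
    with True show ?thesis unfolding cl_mult_def inner by (simp del: Pow_iff)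
  next
    case False
    then have "\<forall>S\<in>Pow {..n}. symdiff S U \<notin> Pow {..n}" by auto
    with False show ?thesis unfolding cl_mult_def inner by (simp del: Pow_iff)
  qed
qed

lemma cl_mult_in_cl_elems: "cl_mult n u v \<in> cl_elems n"
  by (auto simp: cl_elems_def cl_mult_eq)

lemma cl_basis_in_cl_elems: "S \<in> Pow {..n} \<Longrightarrow> cl_basis S \<in> cl_elems n"
  by (auto simp: cl_basis_def cl_elems_def)

lemma cl_mult_sum_left:
  "cl_mult n (\<lambda>U. \<Sum>k\<in>K. a k * f k U) w V = (\<Sum>k\<in>K. a k * cl_mult n (f k) w V)"
  by (simp add: cl_mult_eq sum_distrib_left sum_distrib_right algebra_simps sum.swap[of _ K]
      del: Pow_iff)

lemma cl_mult_sum_right: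
  "cl_mult n w (\<lambda>U. \<Sum>k\<in>K. a k * f k U) V = (\<Sum>k\<in>K. a k * cl_mult n w (f k) V)"
  by (simp add: cl_mult_eq sum_distrib_left sum_distrib_right algebra_simps sum.swap[of _ K]
      del: Pow_iff)

lemma cl_mult_lincomb_left:
  "cl_mult n (\<lambda>U. a * f U + b * g U) w V = a * cl_mult n f w V + b * cl_mult n g w V"
  by (simp add: cl_mult_eq sum.distrib sum_distrib_left algebra_simps del: Pow_iff)

lemma cl_mult_lincomb_right:
  "cl_mult n w (\<lambda>U. a * f U + b * g U) V = a * cl_mult n w f V + b * cl_mult n w g V"
  by (simp add: cl_mult_eq sum.distrib sum_distrib_left algebra_simps del: Pow_iff)

lemma cl_mult_zero_left: "cl_mult n (\<lambda>U. 0) w = (\<lambda>U. 0)"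
  by (rule ext) (simp add: cl_mult_eq del: Pow_iff)

lemma cl_mult_zero_right: "cl_mult n w (\<lambda>U. 0) = (\<lambda>U. 0)"
  by (rule ext) (simp add: cl_mult_eq del: Pow_iff)

lemma cl_mult_basis_left:
  assumes "A \<in> Pow {..n}"
  shows "cl_mult n (cl_basis A) w U =
    (if U \<in> Pow {..n} then cl_sign A (symdiff A U) * w (symdiff A U) else 0)"
  using assms
  by (simp add: cl_mult_eq cl_basis_def if_distrib[of "\<lambda>z. z * _"] if_distrib[of "\<lambda>z. _ * z"]
      cong: if_cong del: Pow_iff)

lemma cl_mult_expand_left:
  "cl_mult n u v = (\<lambda>V. \<Sum>S\<in>Pow {..n}. u S * cl_mult n (cl_basis S) v V)"
proof
  fix V
  have "(\<Sum>S\<in>Pow {..n}. u S * cl_mult n (cl_basis S) v V)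
      = (\<Sum>S\<in>Pow {..n}. u S * (if V \<in> Pow {..n} then cl_sign S (symdiff S V) * v (symdiff S V) else 0))"
    by (intro sum.cong refl) (simp add: cl_mult_basis_left del: Pow_iff)
  then show "cl_mult n u v V = (\<Sum>S\<in>Pow {..n}. u S * cl_mult n (cl_basis S) v V)"
    by (simp add: cl_mult_eq algebra_simps del: Pow_iff)
qed

lemma cl_mult_one_left: "w \<in> cl_elems n \<Longrightarrow> cl_mult n (cl_basis {}) w = w"
  by (auto simp: cl_mult_basis_left cl_sign_def cl_elems_def)

lemma cl_mult_assoc: "cl_mult n (cl_mult n u v) w = cl_mult n u (cl_mult n v w)"
proof
  fix U
  show "cl_mult n (cl_mult n u v) w U = cl_mult n u (cl_mult n v w) U"
  proof (cases "U \<in> Pow {..n}")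
    case False
    then show ?thesis by (simp add: cl_mult_eq del: Pow_iff)
  next
    case U: True
    have "cl_mult n (cl_mult n u v) w U =
       (\<Sum>A\<in>Pow {..n}. \<Sum>S\<in>Pow {..n}.
          cl_sign A (symdiff A U) * cl_sign S (symdiff S A) * u S * v (symdiff S A) * w (symdiff A U))"
      using U by (simp add: cl_mult_eq sum_distrib_left sum_distrib_right algebra_simps
          del: Pow_iff cong: if_cong)
    also have "\<dots> = (\<Sum>S\<in>Pow {..n}. \<Sum>A\<in>Pow {..n}.
          cl_sign A (symdiff A U) * cl_sign S (symdiff S A) * u S * v (symdiff S A) * w (symdiff A U))"
      by (rule sum.swap)
    also have "\<dots> = (\<Sum>S\<in>Pow {..n}. \<Sum>T\<in>Pow {..n}.
          cl_sign (symdiff S T) (symdiff (symdiff S T) U) * cl_sign S T * u S * v T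
            * w (symdiff (symdiff S T) U))"
    proof (rule sum.cong[OF refl])
      fix S assume S: "S \<in> Pow {..n}"
      show "(\<Sum>A\<in>Pow {..n}. cl_sign A (symdiff A U) * cl_sign S (symdiff S A) * u S
            * v (symdiff S A) * w (symdiff A U))
          = (\<Sum>T\<in>Pow {..n}. cl_sign (symdiff S T) (symdiff (symdiff S T) U) * cl_sign S T * u S
            * v T * w (symdiff (symdiff S T) U))"
        by (subst sum_Pow_symdiff_reindex[OF S]) (simp only: symdiff_symdiff_cancel)
    qed
    also have "\<dots> = (\<Sum>S\<in>Pow {..n}. \<Sum>T\<in>Pow {..n}.
          cl_sign S (symdiff S U) * cl_sign T (symdiff T (symdiff S U)) * u S * v T
            * w (symdiff T (symdiff S U)))"
    proof (intro sum.cong refl)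
      fix S T assume "S \<in> Pow {..n}" "T \<in> Pow {..n}"
      then have fin: "finite S" "finite T" "finite U"
        using U finite_of_Pow_atMost by blast+
      have e: "symdiff (symdiff S T) U = symdiff T (symdiff S U)" by blast
      show "cl_sign (symdiff S T) (symdiff (symdiff S T) U) * cl_sign S T * u S * v T
            * w (symdiff (symdiff S T) U)
          = cl_sign S (symdiff S U) * cl_sign T (symdiff T (symdiff S U)) * u S * v T
            * w (symdiff T (symdiff S U))"
        using cl_sign_cocycle[OF fin] unfolding e by simp
    qed
    also have "\<dots> = (\<Sum>S\<in>Pow {..n}. cl_sign S (symdiff S U) * u S *
        (\<Sum>T\<in>Pow {..n}. cl_sign T (symdiff T (symdiff S U)) * v T * w (symdiff T (symdiff S U))))"
      by (simp add: sum_distrib_left algebra_simps)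
    also have "\<dots> = cl_mult n u (cl_mult n v w) U"
      using U by (simp add: cl_mult_eq[of n u] cl_mult_eq[of n v w] symdiff_in_Pow del: Pow_iff)
    finally show ?thesis .
  qed
qed

section \<open>The trace form and the coordinate inner product\<close>

definition cl_inner :: "nat \<Rightarrow> cl \<Rightarrow> cl \<Rightarrow> real" where
  "cl_inner n u v = (\<Sum>S\<in>Pow {..n}. u S * v S)"

lemma cl_tr_eq: "cl_tr n w = 2 ^ Suc n * w {}"
proof -
  have "cl_mult n w (cl_basis S) S = w {}" if S: "S \<in> Pow {..n}" for S
  proof -
    have "cl_mult n w (cl_basis S) S
        = (\<Sum>A\<in>Pow {..n}. cl_sign A (symdiff A S) * w A * cl_basis S (symdiff A S))"
      using S by (simp add: cl_mult_eq del: Pow_iff)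
    also have "\<dots> = (\<Sum>A\<in>Pow {..n}. if A = {} then w A else 0)"
    proof (rule sum.cong[OF refl])
      fix A
      have "symdiff A S = S \<longleftrightarrow> A = {}" by blast
      then show "cl_sign A (symdiff A S) * w A * cl_basis S (symdiff A S) = (if A = {} then w A else 0)"
        by (simp add: cl_basis_def cl_sign_def)
    qed
    finally show ?thesis by simp
  qed
  then have "cl_tr n w = (\<Sum>S\<in>Pow {..n}. w {})"
    unfolding cl_tr_def by (intro sum.cong) auto
  also have "\<dots> = 2 ^ Suc n * w {}" by (simp add: card_Pow)
  finally show ?thesis .
qed

lemma card_inversions_self: "finite S \<Longrightarrow> 2 * card (inversions S S) = card S * (card S - 1)"
proof (induction S rule: finite_linorder_max_induct)
  case empty
  then show ?case by (simp add: inversions_def)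
next
  case (insert b A)
  have "inversions (insert b A) (insert b A) = inversions A A \<union> Pair b ` A"
    and "inversions A A \<inter> Pair b ` A = {}"
    using insert.hyps by (auto simp: inversions_def)
  then have "card (inversions (insert b A) (insert b A)) = card (inversions A A) + card A"
    using insert.hyps by (simp add: card_Un_disjoint finite_inversions card_image inj_on_def)
  moreover have "b \<notin> A" using insert.hyps by auto
  ultimately show ?case
    using insert.IH insert.hyps by (cases "card A") (auto simp: algebra_simps)
qed

lemma cl_sign_self_rev:
  assumes "finite S"
  shows "cl_sign S S * (-1) ^ (card S * (card S - 1) div 2) = 1"
proof -
  have "card (inversions S S) = card S * (card S - 1) div 2"
    using card_inversions_self[OF assms] by simp
  then show ?thesis by (simp add: cl_sign_eq_inversions flip: power_add mult_2)
qed

lemma cl_beta_eq: "cl_beta n u v = 2 ^ Suc n * cl_inner n u v"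
proof -
  have "cl_mult n (cl_rev u) v {} = (\<Sum>S\<in>Pow {..n}. cl_sign S S * cl_rev u S * v S)"
    by (simp add: cl_mult_eq)
  also have "\<dots> = cl_inner n u v"
    unfolding cl_inner_def
  proof (intro sum.cong refl)
    fix S assume "S \<in> Pow {..n}"
    then have "cl_sign S S * (-1) ^ (card S * (card S - 1) div 2) = 1"
      by (intro cl_sign_self_rev finite_of_Pow_atMost)
    then show "cl_sign S S * cl_rev u S * v S = u S * v S"
      unfolding cl_rev_def by (metis mult.assoc mult_1)
  qed
  finally show ?thesis by (simp add: cl_beta_def cl_tr_eq)
qed

lemma cl_inner_commute: "cl_inner n u v = cl_inner n v u"
  unfolding cl_inner_def by (simp add: mult.commute)

lemma cl_inner_lincomb_left:
  "cl_inner n (\<lambda>U. a * f U + b * g U) h = a * cl_inner n f h + b * cl_inner n g h"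
  unfolding cl_inner_def by (simp add: sum.distrib sum_distrib_left algebra_simps)

lemma cl_inner_diff_left: "cl_inner n (\<lambda>U. f U - g U) h = cl_inner n f h - cl_inner n g h"
  unfolding cl_inner_def by (simp add: sum_subtractf[symmetric] algebra_simps)

lemma cl_inner_sum_left:
  "cl_inner n (\<lambda>U. \<Sum>k\<in>K. a k * f k U) g = (\<Sum>k\<in>K. a k * cl_inner n (f k) g)"
  unfolding cl_inner_def by (simp add: sum_distrib_left sum_distrib_right mult.assoc sum.swap[of _ K])

lemma cl_inner_sum_right:
  "cl_inner n g (\<lambda>U. \<Sum>k\<in>K. a k * f k U) = (\<Sum>k\<in>K. a k * cl_inner n g (f k))"
  unfolding cl_inner_def by (simp add: sum_distrib_left mult.left_commute sum.swap[of _ K])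

lemma cl_inner_basis:
  assumes "g \<in> cl_elems n"
  shows "cl_inner n (cl_basis S) g = g S"
proof (cases "S \<in> Pow {..n}")
  case True
  then show ?thesis
    unfolding cl_inner_def cl_basis_def by (simp add: if_distrib[of "\<lambda>z. z * _"] cong: if_cong)
next
  case False
  then have "cl_inner n (cl_basis S) g = 0"
    unfolding cl_inner_def cl_basis_def by (intro sum.neutral) auto
  moreover have "g S = 0" using assms False unfolding cl_elems_def by auto
  ultimately show ?thesis by simp
qed

lemma cl_inner_self_eq_0_iff: "cl_inner n w w = 0 \<longleftrightarrow> (\<forall>S\<in>Pow {..n}. w S = 0)"
  unfolding cl_inner_def by (subst sum_nonneg_eq_0_iff) auto

lemma cl_inner_basis_mult:
  assumes "i \<le> n"
  shows "cl_inner n (cl_mult n (cl_basis {i}) w) v = cl_inner n w (cl_mult n (cl_basis {i}) v)"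
proof -
  have i: "{i} \<in> Pow {..n}" using assms by auto
  have "inversions {i} (symdiff {i} T) = inversions {i} T" for T
    by (auto simp: inversions_def)
  then have sign: "cl_sign {i} (symdiff {i} T) = cl_sign {i} T" for T
    by (simp add: cl_sign_eq_inversions)
  have "cl_inner n (cl_mult n (cl_basis {i}) w) v
      = (\<Sum>U\<in>Pow {..n}. cl_sign {i} (symdiff {i} U) * w (symdiff {i} U) * v U)"
    unfolding cl_inner_def by (intro sum.cong refl) (simp add: cl_mult_basis_left[OF i] del: Pow_iff)
  also have "\<dots> = (\<Sum>T\<in>Pow {..n}. cl_sign {i} T * w T * v (symdiff {i} T))"
    by (subst sum_Pow_symdiff_reindex[OF i]) simp
  also have "\<dots> = cl_inner n w (cl_mult n (cl_basis {i}) v)"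
    unfolding cl_inner_def
    by (intro sum.cong refl) (simp add: cl_mult_basis_left[OF i] sign del: Pow_iff)
  finally show ?thesis .
qed

lemma cl_xvec_mult: "cl_mult n (cl_xvec n x) w V = (\<Sum>i\<le>n. x i * cl_mult n (cl_basis {i}) w V)"
  unfolding cl_xvec_def by (rule cl_mult_sum_left)

lemma cl_inner_xvec_mult:
  "cl_inner n (cl_mult n (cl_xvec n x) w) v = cl_inner n w (cl_mult n (cl_xvec n x) v)"
proof -
  have "cl_inner n (cl_mult n (cl_xvec n x) w) v
      = (\<Sum>i\<le>n. x i * cl_inner n (cl_mult n (cl_basis {i}) w) v)"
    unfolding cl_inner_def cl_xvec_mult
    by (simp add: sum_distrib_left sum_distrib_right algebra_simps sum.swap[of _ "{..n}"] del: Pow_iff)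
  also have "\<dots> = (\<Sum>i\<le>n. x i * cl_inner n w (cl_mult n (cl_basis {i}) v))"
    by (intro sum.cong refl) (simp add: cl_inner_basis_mult)
  also have "\<dots> = cl_inner n w (cl_mult n (cl_xvec n x) v)"
    unfolding cl_inner_def cl_xvec_mult
    by (simp add: sum_distrib_left sum_distrib_right algebra_simps sum.swap[of _ "{..n}"] del: Pow_iff)
  finally show ?thesis .
qed

lemma cl_basis_mult_singletons:
  assumes "i \<le> n" "j \<le> n"
  shows "cl_mult n (cl_basis {i}) (cl_basis {j}) V = (if symdiff {i} {j} = V then cl_sign {i} {j} else 0)"
proof -
  have i: "{i} \<in> Pow {..n}" using assms by auto
  have "symdiff {i} V = {j} \<longleftrightarrow> symdiff {i} {j} = V" by blast
  moreover have "symdiff {i} {j} \<in> Pow {..n}" using assms by auto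
  ultimately show ?thesis
    unfolding cl_mult_basis_left[OF i] by (auto simp: cl_basis_def simp del: Pow_iff)
qed

lemma cl_sign_singleton_self: "cl_sign {i} {i} = 1"
proof -
  have "{(a, b). a \<in> {i} \<and> b \<in> {i} \<and> b < a} = {}" by auto
  then show ?thesis by (simp only: cl_sign_def) simp
qed

lemma cl_sign_singleton_swap: "i \<noteq> j \<Longrightarrow> cl_sign {i} {j} = - cl_sign {j} {i}"
proof -
  assume "i \<noteq> j"
  moreover have "inversions {i} {j} = (if j < i then {(i, j)} else {})"
    and "inversions {j} {i} = (if i < j then {(j, i)} else {})"
    by (auto simp: inversions_def)
  ultimately show ?thesis by (auto simp: cl_sign_eq_inversions)
qed

lemma cl_xvec_square:
  assumes "x \<in> sphere_pts n"
  shows "cl_mult n (cl_xvec n x) (cl_xvec n x) = cl_basis {}"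
proof
  fix V
  define g where "g i j = (if symdiff {i} {j} = V then cl_sign {i} {j} else (0::real))" for i j :: nat
  have "cl_mult n (cl_xvec n x) (cl_xvec n x) V = (\<Sum>i\<le>n. \<Sum>j\<le>n. x i * (x j * g i j))"
    unfolding cl_xvec_mult
    by (intro sum.cong refl)
      (simp add: cl_xvec_def cl_mult_sum_right cl_basis_mult_singletons g_def sum_distrib_left)
  also have "\<dots> = cl_basis {} V"
  proof (cases "V = {}")
    case True
    then have "g i j = (if j = i then 1 else 0)" for i j
      by (auto simp: g_def cl_sign_singleton_self)
    then have "(\<Sum>i\<le>n. \<Sum>j\<le>n. x i * (x j * g i j)) = (\<Sum>i\<le>n. (x i)^2)"
      by (simp add: if_distrib[of "\<lambda>z. _ * z"] power2_eq_square cong: if_cong)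
    also have "\<dots> = 1" using assms by (simp add: sphere_pts_def)
    finally show ?thesis using True by (simp add: cl_basis_def)
  next
    case V: False
    \<comment> \<open>the cross terms x_i x_j e_i e_j cancel in pairs by anticommutativity\<close>
    have anti: "g j i = - g i j" for i j
    proof (cases "i = j")
      case True
      then show ?thesis using V by (simp add: g_def)
    next
      case False
      moreover have "symdiff {j} {i} = symdiff {i} {j}" by blast
      ultimately show ?thesis by (simp add: g_def cl_sign_singleton_swap[of j i])
    qed
    define T where "T = (\<Sum>i\<le>n. \<Sum>j\<le>n. x i * (x j * g i j))"
    have "T = (\<Sum>j\<le>n. \<Sum>i\<le>n. x i * (x j * g i j))"
      unfolding T_def by (rule sum.swap)
    also have "\<dots> = - T"
      unfolding T_def sum_negf[symmetric]
    proof (intro sum.cong refl)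
      fix i j
      show "x j * (x i * g j i) = - (x i * (x j * g i j))" using anti[of i j] by simp
    qed
    finally have "T = 0" by simp
    then show ?thesis using V by (simp add: T_def cl_basis_def)
  qed
  finally show "cl_mult n (cl_xvec n x) (cl_xvec n x) V = cl_basis {} V" .
qed

lemma cl_xvec_mult_cancel:
  "x \<in> sphere_pts n \<Longrightarrow> w \<in> cl_elems n \<Longrightarrow> cl_mult n (cl_xvec n x) (cl_mult n (cl_xvec n x) w) = w"
  by (simp add: cl_mult_assoc[symmetric] cl_xvec_square cl_mult_one_left)

lemma An_I:
  assumes "p \<in> polyfun n" "\<And>x. x \<in> sphere_pts n \<Longrightarrow> f x = p x"
    "\<And>x. x \<notin> sphere_pts n \<Longrightarrow> f x = 0"
  shows "f \<in> An n"
  unfolding An_def using assms by auto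

lemma An_E:
  assumes "f \<in> An n"
  obtains p where "p \<in> polyfun n" "\<And>x. x \<in> sphere_pts n \<Longrightarrow> f x = p x"
    "\<And>x. x \<notin> sphere_pts n \<Longrightarrow> f x = 0"
  using assms unfolding An_def by auto

lemma An_zero: "(\<lambda>x. 0) \<in> An n"
  by (rule An_I[OF polyfun.pf_const[of 0]]) auto

lemma An_add: "f \<in> An n \<Longrightarrow> g \<in> An n \<Longrightarrow> (\<lambda>x. f x + g x) \<in> An n"
  by (erule An_E, erule An_E, rule An_I[OF polyfun.pf_add]) auto

lemma An_mult: "f \<in> An n \<Longrightarrow> g \<in> An n \<Longrightarrow> (\<lambda>x. f x * g x) \<in> An n"
  by (erule An_E, erule An_E, rule An_I[OF polyfun.pf_mult]) auto

lemma An_scale: "f \<in> An n \<Longrightarrow> (\<lambda>x. c * f x) \<in> An n"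
  by (erule An_E, rule An_I[OF polyfun.pf_mult[OF polyfun.pf_const]]) auto

lemma polyfun_sum:
  "finite K \<Longrightarrow> (\<And>k. k \<in> K \<Longrightarrow> f k \<in> polyfun n) \<Longrightarrow> (\<lambda>x. \<Sum>k\<in>K. f k x) \<in> polyfun n"
  by (induction K rule: finite_induct) (simp_all add: polyfun.pf_const polyfun.pf_add)

lemma polyfun_affine: "(\<lambda>x. a * (b - (\<Sum>i\<le>n. x i * c i))) \<in> polyfun n"
proof -
  have "(\<lambda>x. \<Sum>i\<le>n. x i * c i) \<in> polyfun n"
    by (rule polyfun_sum) (auto intro: polyfun.intros)
  then have "(\<lambda>x. a * (b + (-1) * (\<Sum>i\<le>n. x i * c i))) \<in> polyfun n"
    by (intro polyfun.intros)
  then show ?thesis by simp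
qed

lemma cl_E_in_cl_elems: "u \<in> cl_E n e \<Longrightarrow> u \<in> cl_elems n"
  unfolding cl_E_def using cl_mult_in_cl_elems by auto

lemma cl_E_lincomb:
  assumes "u \<in> cl_E n e" "v \<in> cl_E n e"
  shows "(\<lambda>U. a * u U + b * v U) \<in> cl_E n e"
proof -
  obtain u' v' where "u' \<in> cl_elems n" "u = cl_mult n u' e" "v' \<in> cl_elems n" "v = cl_mult n v' e"
    using assms unfolding cl_E_def by auto
  moreover from this have "(\<lambda>S. a * u' S + b * v' S) \<in> cl_elems n"
    by (auto simp: cl_elems_def)
  ultimately show ?thesis
    unfolding cl_E_def by (auto intro!: exI[of _ "\<lambda>S. a * u' S + b * v' S"] simp: cl_mult_lincomb_left)
qed

lemma cl_E_zero: "(\<lambda>U. 0) \<in> cl_E n e"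
proof -
  have "(\<lambda>S. 0) \<in> cl_elems n" by (auto simp: cl_elems_def)
  then show ?thesis unfolding cl_E_def by (auto simp: cl_mult_zero_left intro!: exI[of _ "\<lambda>S. 0"])
qed

lemma cl_E_sum:
  "finite K \<Longrightarrow> (\<And>k. k \<in> K \<Longrightarrow> w k \<in> cl_E n e) \<Longrightarrow> (\<lambda>U. \<Sum>k\<in>K. a k * w k U) \<in> cl_E n e"
proof (induction K rule: finite_induct)
  case empty
  then show ?case by (simp add: cl_E_zero)
next
  case (insert k K)
  then have "(\<lambda>U. a k * w k U + 1 * (\<Sum>k\<in>K. a k * w k U)) \<in> cl_E n e"
    by (intro cl_E_lincomb) auto
  with insert show ?case by simp
qed

lemma cl_E_mult_left: "u \<in> cl_E n e \<Longrightarrow> cl_mult n w u \<in> cl_E n e"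
  unfolding cl_E_def by (auto simp: cl_mult_assoc[symmetric] cl_mult_in_cl_elems)

lemma cl_E_basis_mult: "S \<in> Pow {..n} \<Longrightarrow> cl_mult n (cl_basis S) e \<in> cl_E n e"
  unfolding cl_E_def using cl_basis_in_cl_elems by blast

lemma cl_E_mult_idempotent: "cl_mult n e e = e \<Longrightarrow> u \<in> cl_E n e \<Longrightarrow> cl_mult n u e = u"
  unfolding cl_E_def by (auto simp: cl_mult_assoc)

section \<open>The projection (1 - x)/2\<close>

definition neg_proj :: "nat \<Rightarrow> pt \<Rightarrow> cl \<Rightarrow> cl" where
  "neg_proj n x w = (\<lambda>U. (w U - cl_mult n (cl_xvec n x) w U) / 2)"

lemma neg_proj_lincomb:
  "neg_proj n x w = (\<lambda>U. (1/2) * w U + (-1/2) * cl_mult n (cl_xvec n x) w U)"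
  unfolding neg_proj_def by (rule ext) (simp add: field_simps)

lemma neg_proj_in_cl_E: "w \<in> cl_E n e \<Longrightarrow> neg_proj n x w \<in> cl_E n e"
  unfolding neg_proj_lincomb by (intro cl_E_lincomb cl_E_mult_left)

lemma cl_xvec_mult_neg_proj:
  assumes "x \<in> sphere_pts n" "w \<in> cl_elems n"
  shows "cl_mult n (cl_xvec n x) (neg_proj n x w) = (\<lambda>U. - neg_proj n x w U)"
proof
  fix U
  have "cl_mult n (cl_xvec n x) (neg_proj n x w) U
      = (1/2) * cl_mult n (cl_xvec n x) w U + (-1/2) * cl_mult n (cl_xvec n x) (cl_mult n (cl_xvec n x) w) U"
    unfolding neg_proj_lincomb by (rule cl_mult_lincomb_right)
  then show "cl_mult n (cl_xvec n x) (neg_proj n x w) U = - neg_proj n x w U"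
    using cl_xvec_mult_cancel[OF assms] by (simp add: neg_proj_lincomb)
qed

lemma neg_proj_fixed: "cl_mult n (cl_xvec n x) w = (\<lambda>U. - w U) \<Longrightarrow> neg_proj n x w = w"
  unfolding neg_proj_def by simp

lemma neg_proj_sum:
  "neg_proj n x (\<lambda>U. \<Sum>k\<in>K. a k * w k U) V = (\<Sum>k\<in>K. a k * neg_proj n x (w k) V)"
  unfolding neg_proj_def
  by (simp add: cl_mult_sum_right sum_divide_distrib[symmetric] sum_subtractf[symmetric]
      right_diff_distrib)

lemma cl_inner_neg_proj:
  assumes "cl_mult n (cl_xvec n x) g = (\<lambda>U. - g U)"
  shows "cl_inner n (neg_proj n x w) g = cl_inner n w g"
proof -
  have "cl_inner n (cl_mult n (cl_xvec n x) w) g = - cl_inner n w g"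
    unfolding cl_inner_xvec_mult assms by (simp add: cl_inner_def sum_negf[symmetric])
  moreover have "cl_inner n (neg_proj n x w) g = (cl_inner n w g - cl_inner n (cl_mult n (cl_xvec n x) w) g) / 2"
    unfolding neg_proj_def cl_inner_def
    by (simp add: sum_divide_distrib[symmetric] sum_subtractf[symmetric] left_diff_distrib)
  ultimately show ?thesis by simp
qed

lemma Pn_in_AEmod: "F \<in> Pn n e \<Longrightarrow> F \<in> AEmod n e"
  unfolding Pn_def by auto

lemma Pn_outside_sphere: "F \<in> Pn n e \<Longrightarrow> x \<notin> sphere_pts n \<Longrightarrow> F x = (\<lambda>S. 0)"
  unfolding Pn_def AEmod_def by auto

lemma Pn_coordinate: "F \<in> Pn n e \<Longrightarrow> (\<lambda>x. F x S) \<in> An n"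
  unfolding Pn_def AEmod_def by auto

lemma Pn_in_cl_E: "F \<in> Pn n e \<Longrightarrow> F x \<in> cl_E n e"
  unfolding Pn_def AEmod_def by auto

lemma Pn_xvec_mult: "F \<in> Pn n e \<Longrightarrow> cl_mult n (cl_xvec n x) (F x) = (\<lambda>U. - F x U)"
proof
  fix U assume "F \<in> Pn n e"
  then have "Phi n F x U = 0" unfolding Pn_def by auto
  then show "cl_mult n (cl_xvec n x) (F x) U = - F x U" unfolding Phi_def by simp
qed

lemma PnI:
  assumes "\<And>x. x \<notin> sphere_pts n \<Longrightarrow> F x = (\<lambda>S. 0)"
    and "\<And>S. (\<lambda>x. F x S) \<in> An n"
    and "\<And>x. F x \<in> cl_E n e"
    and "\<And>x. x \<in> sphere_pts n \<Longrightarrow> cl_mult n (cl_xvec n x) (F x) = (\<lambda>U. - F x U)"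
  shows "F \<in> Pn n e"
proof -
  have "Phi n F x S = 0" for x S
    using assms(1,4) by (cases "x \<in> sphere_pts n") (simp_all add: Phi_def cl_mult_zero_right)
  then have "Phi n F = (\<lambda>x S. 0)" by (intro ext)
  with assms show ?thesis unfolding Pn_def AEmod_def by auto
qed

lemma Pn_zero: "(\<lambda>x S. 0) \<in> Pn n e"
  by (rule PnI) (auto simp: An_zero cl_E_zero cl_mult_zero_right)

lemma Pn_add: "F \<in> Pn n e \<Longrightarrow> G \<in> Pn n e \<Longrightarrow> ae_add F G \<in> Pn n e"
  unfolding ae_add_def
proof (rule PnI)
  fix x S
  assume F: "F \<in> Pn n e" and G: "G \<in> Pn n e"
  show "x \<notin> sphere_pts n \<Longrightarrow> (\<lambda>S. F x S + G x S) = (\<lambda>S. 0)"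
    using Pn_outside_sphere[OF F] Pn_outside_sphere[OF G] by auto
  show "(\<lambda>x. F x S + G x S) \<in> An n"
    using An_add[OF Pn_coordinate[OF F] Pn_coordinate[OF G]] .
  show "(\<lambda>S. F x S + G x S) \<in> cl_E n e"
    using cl_E_lincomb[OF Pn_in_cl_E[OF F] Pn_in_cl_E[OF G], where a = 1 and b = 1] by simp
  show "cl_mult n (cl_xvec n x) (\<lambda>S. F x S + G x S) = (\<lambda>U. - (F x U + G x U))"
    using cl_mult_lincomb_right[where a = 1 and b = 1]
    by (simp add: fun_eq_iff Pn_xvec_mult[OF F] Pn_xvec_mult[OF G])
qed

lemma Pn_smul: "a \<in> An n \<Longrightarrow> F \<in> Pn n e \<Longrightarrow> ae_smul a F \<in> Pn n e"
  unfolding ae_smul_def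
proof (rule PnI)
  fix x S
  assume a: "a \<in> An n" and F: "F \<in> Pn n e"
  show "x \<notin> sphere_pts n \<Longrightarrow> (\<lambda>S. a x * F x S) = (\<lambda>S. 0)"
    using Pn_outside_sphere[OF F] by auto
  show "(\<lambda>x. a x * F x S) \<in> An n"
    using An_mult[OF a Pn_coordinate[OF F]] .
  show "(\<lambda>S. a x * F x S) \<in> cl_E n e"
    using cl_E_lincomb[OF Pn_in_cl_E[OF F] Pn_in_cl_E[OF F], where a = "a x" and b = 0] by simp
  show "cl_mult n (cl_xvec n x) (\<lambda>S. a x * F x S) = (\<lambda>U. - (a x * F x U))"
    using cl_mult_lincomb_right[where a = "a x" and b = 0]
    by (simp add: fun_eq_iff Pn_xvec_mult[OF F])
qed

lemma Pn_sum:
  "finite K \<Longrightarrow> (\<And>k. k \<in> K \<Longrightarrow> a k \<in> An n \<and> G k \<in> Pn n e) \<Longrightarrow>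
    (\<lambda>x U. \<Sum>k\<in>K. a k x * G k x U) \<in> Pn n e"
proof (induction K rule: finite_induct)
  case empty
  then show ?case by (simp add: Pn_zero)
next
  case (insert k K)
  then have "ae_add (ae_smul (a k) (G k)) (\<lambda>x U. \<Sum>k\<in>K. a k x * G k x U) \<in> Pn n e"
    by (intro Pn_add Pn_smul) auto
  with insert show ?case by (simp add: ae_add_def ae_smul_def)
qed

definition neg_proj_section :: "nat \<Rightarrow> cl \<Rightarrow> aeel" where
  "neg_proj_section n w = (\<lambda>x. if x \<in> sphere_pts n then neg_proj n x w else (\<lambda>U. 0))"

lemma neg_proj_section_in_Pn:
  assumes "w \<in> cl_E n e"
  shows "neg_proj_section n w \<in> Pn n e"
proof (rule PnI)
  fix x U
  show "x \<notin> sphere_pts n \<Longrightarrow> neg_proj_section n w x = (\<lambda>S. 0)"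
    by (simp add: neg_proj_section_def)
  show "(\<lambda>x. neg_proj_section n w x U) \<in> An n"
    by (rule An_I[OF polyfun_affine[where a = "1/2" and b = "w U" and c = "\<lambda>i. cl_mult n (cl_basis {i}) w U"]])
      (simp_all add: neg_proj_section_def neg_proj_def cl_xvec_mult)
  show "neg_proj_section n w x \<in> cl_E n e"
    using neg_proj_in_cl_E[OF assms] cl_E_zero by (simp add: neg_proj_section_def)
  show "x \<in> sphere_pts n \<Longrightarrow> cl_mult n (cl_xvec n x) (neg_proj_section n w x) = (\<lambda>U. - neg_proj_section n w x U)"
    using cl_xvec_mult_neg_proj cl_E_in_cl_elems[OF assms] by (simp add: neg_proj_section_def)
qed

definition Pn_generator :: "nat \<Rightarrow> cl \<Rightarrow> nat set \<Rightarrow> aeel" where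
  "Pn_generator n e S = neg_proj_section n (cl_mult n (cl_basis S) e)"

lemma Pn_generator_in_Pn: "S \<in> Pow {..n} \<Longrightarrow> Pn_generator n e S \<in> Pn n e"
  unfolding Pn_generator_def by (intro neg_proj_section_in_Pn cl_E_basis_mult)

lemma Pn_expansion:
  assumes "cl_mult n e e = e" "F \<in> Pn n e"
  shows "F = (\<lambda>x U. \<Sum>S\<in>Pow {..n}. F x S * Pn_generator n e S x U)"
proof (intro ext)
  fix x U
  show "F x U = (\<Sum>S\<in>Pow {..n}. F x S * Pn_generator n e S x U)"
  proof (cases "x \<in> sphere_pts n")
    case False
    then show ?thesis
      using Pn_outside_sphere[OF assms(2)] by (simp add: Pn_generator_def neg_proj_section_def)
  next
    case True
    have "(\<Sum>S\<in>Pow {..n}. F x S * Pn_generator n e S x U)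
        = neg_proj n x (\<lambda>V. \<Sum>S\<in>Pow {..n}. F x S * cl_mult n (cl_basis S) e V) U"
      using True by (simp add: Pn_generator_def neg_proj_section_def neg_proj_sum)
    also have "(\<lambda>V. \<Sum>S\<in>Pow {..n}. F x S * cl_mult n (cl_basis S) e V) = F x"
      using cl_E_mult_idempotent[OF assms(1) Pn_in_cl_E[OF assms(2)]]
      by (simp add: cl_mult_expand_left[symmetric])
    also have "neg_proj n x (F x) = F x"
      by (rule neg_proj_fixed[OF Pn_xvec_mult[OF assms(2)]])
    finally show ?thesis ..
  qed
qed

lemma Pn_fg_projective:
  assumes "cl_mult n e e = e"
  shows "fg_projective n e (Pn n e)"
proof -
  define m where "m = card (Pow {..n})"
  obtain h where h: "bij_betw h {0..<m} (Pow {..n})"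
    using ex_bij_betw_nat_finite[of "Pow {..n}"] unfolding m_def by auto
  then have h_Pow: "k < m \<Longrightarrow> h k \<in> Pow {..n}" for k
    using bij_betwE by fastforce
  define i where "i = (\<lambda>(F::aeel) (k::nat) (x::pt). if k < m then F x (h k) else 0)"
  define r where "r = (\<lambda>(v::nat \<Rightarrow> ael) x U. \<Sum>k\<in>{0..<m}. v k x * Pn_generator n e (h k) x U)"
  have "An_submodule n e (Pn n e)"
    unfolding An_submodule_def using Pn_in_AEmod Pn_zero Pn_add Pn_smul by blast
  moreover have "\<forall>F\<in>Pn n e. i F \<in> free_mod n m"
    unfolding free_mod_def i_def using Pn_coordinate by auto
  moreover have "\<forall>v\<in>free_mod n m. r v \<in> Pn n e"
    unfolding r_def free_mod_def using h_Pow Pn_generator_in_Pn by (auto intro!: Pn_sum simp del: Pow_iff)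
  moreover have "r (i F) = F" if "F \<in> Pn n e" for F
  proof -
    have "r (i F) = (\<lambda>x U. \<Sum>k\<in>{0..<m}. F x (h k) * Pn_generator n e (h k) x U)"
      unfolding r_def i_def by (intro ext sum.cong) auto
    also have "\<dots> = (\<lambda>x U. \<Sum>S\<in>Pow {..n}. F x S * Pn_generator n e S x U)"
      by (intro ext sum.reindex_bij_betw[OF h])
    also have "\<dots> = F" using Pn_expansion[OF assms that] by simp
    finally show ?thesis .
  qed
  moreover have "\<forall>F\<in>Pn n e. \<forall>G\<in>Pn n e. i (ae_add F G) = fv_add (i F) (i G)"
    unfolding i_def fv_add_def ae_add_def by (simp add: fun_eq_iff)
  moreover have "\<forall>a\<in>An n. \<forall>F\<in>Pn n e. i (ae_smul a F) = fv_smul a (i F)"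
    unfolding i_def fv_smul_def ae_smul_def by (simp add: fun_eq_iff)
  moreover have "\<forall>v w. r (fv_add v w) = ae_add (r v) (r w)"
    unfolding r_def fv_add_def ae_add_def by (simp add: sum.distrib distrib_right)
  moreover have "\<forall>a v. r (fv_smul a v) = ae_smul a (r v)"
    unfolding r_def fv_smul_def ae_smul_def by (simp add: sum_distrib_left mult.assoc)
  ultimately show ?thesis
    unfolding fg_projective_def by blast
qed

section \<open>Coordinate functionals on E\<close>

lemma cl_inner_orthogonal_projection:
  "finite V \<Longrightarrow> \<exists>a. \<forall>v\<in>V. cl_inner n (\<lambda>U. u U - (\<Sum>w\<in>V. a w * w U)) v = 0"
proof (induction V arbitrary: u rule: finite_induct)
  case empty
  then show ?case by simp
next
  case (insert v V)
  obtain a where a: "\<forall>y\<in>V. cl_inner n (\<lambda>U. u U - (\<Sum>w\<in>V. a w * w U)) y = 0"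
    using insert.IH by blast
  obtain b where b: "\<forall>y\<in>V. cl_inner n (\<lambda>U. v U - (\<Sum>w\<in>V. b w * w U)) y = 0"
    using insert.IH by blast
  define r where "r = (\<lambda>U. u U - (\<Sum>w\<in>V. a w * w U))"
  define q where "q = (\<lambda>U. \<Sum>w\<in>V. b w * w U)"
  define d where "d = (\<lambda>U. v U - q U)"
  define c where "c = cl_inner n r d / cl_inner n d d"
    \<comment> \<open>if \<open>cl_inner n d d = 0\<close> then \<open>c = 0\<close>, and r is already orthogonal to d\<close>
  define a' where "a' w = (if w = v then c else a w - c * b w)" for w
  define r' where "r' = (\<lambda>U. 1 * r U + (- c) * d U)"
  have r'_eq: "r' = (\<lambda>U. u U - (\<Sum>w\<in>insert v V. a' w * w U))"
  proof
    fix U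
    have "(\<Sum>w\<in>V. a' w * w U) = (\<Sum>w\<in>V. a w * w U - c * (b w * w U))"
      using insert.hyps(2) by (intro sum.cong) (auto simp: a'_def algebra_simps)
    also have "\<dots> = (\<Sum>w\<in>V. a w * w U) - c * (\<Sum>w\<in>V. b w * w U)"
      by (simp add: sum_subtractf sum_distrib_left)
    finally have "(\<Sum>w\<in>V. a' w * w U) = (\<Sum>w\<in>V. a w * w U) - c * (\<Sum>w\<in>V. b w * w U)" .
    moreover have "a' v = c" by (simp add: a'_def)
    ultimately show "r' U = u U - (\<Sum>w\<in>insert v V. a' w * w U)"
      using insert.hyps by (simp add: r'_def r_def d_def q_def algebra_simps)
  qed
  have r'_orth_V: "cl_inner n r' y = 0" if "y \<in> V" for y
    using a b that unfolding r'_def cl_inner_lincomb_left r_def d_def q_def by simp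
  have "cl_inner n r d = c * cl_inner n d d"
  proof (cases "cl_inner n d d = 0")
    case True
    then have "cl_inner n d r = 0"
      unfolding cl_inner_self_eq_0_iff by (simp add: cl_inner_def)
    with True show ?thesis by (simp add: cl_inner_commute)
  qed (simp add: c_def)
  then have "cl_inner n r' d = 0"
    unfolding r'_def cl_inner_lincomb_left by simp
  moreover have "cl_inner n r' q = 0"
    unfolding q_def cl_inner_sum_right using r'_orth_V by simp
  ultimately have "cl_inner n r' v = 0"
    using cl_inner_diff_left[of n v q r'] unfolding d_def by (simp add: cl_inner_commute)
  then show ?case
    using r'_orth_V unfolding r'_eq by (intro exI[of _ a']) auto
qed

lemma cl_E_coordinate_representer:
  "\<exists>\<pi>\<in>cl_E n e. \<forall>g\<in>cl_E n e. cl_inner n \<pi> g = g S"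
proof -
  define V where "V = (\<lambda>T. cl_mult n (cl_basis T) e) ` Pow {..n}"
  have V_in: "cl_mult n (cl_basis T) e \<in> V" if "T \<in> Pow {..n}" for T
    unfolding V_def using that by blast
  have V: "finite V" "\<And>v. v \<in> V \<Longrightarrow> v \<in> cl_E n e"
    unfolding V_def using cl_E_basis_mult by simp_all blast
  obtain a where a: "\<forall>v\<in>V. cl_inner n (\<lambda>U. cl_basis S U - (\<Sum>w\<in>V. a w * w U)) v = 0"
    using cl_inner_orthogonal_projection[OF V(1)] by blast
  define \<pi> where "\<pi> = (\<lambda>U. \<Sum>w\<in>V. a w * w U)"
  have orth: "cl_inner n (\<lambda>U. cl_basis S U - \<pi> U) (cl_mult n (cl_basis T) e) = 0"
    if "T \<in> Pow {..n}" for T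
    unfolding \<pi>_def by (rule bspec[OF a V_in[OF that]])
  have "cl_inner n \<pi> g = g S" if g: "g \<in> cl_E n e" for g
  proof -
    obtain u where "g = cl_mult n u e" using g unfolding cl_E_def by blast
    then have g_eq: "g = (\<lambda>U. \<Sum>T\<in>Pow {..n}. u T * cl_mult n (cl_basis T) e U)"
      by (simp only: cl_mult_expand_left[of n u e])
    have "cl_inner n (\<lambda>U. cl_basis S U - \<pi> U) g = 0"
      unfolding g_eq cl_inner_sum_right by (intro sum.neutral) (simp add: orth)
    then show ?thesis
      using cl_inner_basis[OF cl_E_in_cl_elems[OF g]] by (simp add: cl_inner_diff_left)
  qed
  moreover have "\<pi> \<in> cl_E n e"
    unfolding \<pi>_def using V by (intro cl_E_sum) auto
  ultimately show ?thesis by blast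
qed

section \<open>Non-degeneracy\<close>

lemma An_linear_form_sum:
  assumes \<phi>: "An_linear_form n (Pn n e) \<phi>"
  shows "finite K \<Longrightarrow> (\<And>k. k \<in> K \<Longrightarrow> a k \<in> An n \<and> G k \<in> Pn n e) \<Longrightarrow>
    \<phi> (\<lambda>x U. \<Sum>k\<in>K. a k x * G k x U) = (\<lambda>x. \<Sum>k\<in>K. a k x * \<phi> (G k) x)"
proof (induction K rule: finite_induct)
  case empty
  have "ae_add (\<lambda>x S. 0) (\<lambda>x S. 0) = (\<lambda>x S. 0)" by (simp add: ae_add_def)
  then have "\<phi> (\<lambda>x S. 0) = (\<lambda>x. \<phi> (\<lambda>x S. 0) x + \<phi> (\<lambda>x S. 0) x)"
    using \<phi> Pn_zero unfolding An_linear_form_def by metis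
  then show ?case by (simp add: fun_eq_iff)
next
  case (insert k K)
  have "(\<lambda>x U. \<Sum>k\<in>insert k K. a k x * G k x U)
      = ae_add (ae_smul (a k) (G k)) (\<lambda>x U. \<Sum>k\<in>K. a k x * G k x U)"
    using insert.hyps by (simp add: ae_add_def ae_smul_def)
  moreover have "ae_smul (a k) (G k) \<in> Pn n e"
    using insert.prems by (auto intro: Pn_smul)
  moreover have "(\<lambda>x U. \<Sum>k\<in>K. a k x * G k x U) \<in> Pn n e"
    using insert by (intro Pn_sum) auto
  moreover have "\<phi> (ae_smul (a k) (G k)) = (\<lambda>x. a k x * \<phi> (G k) x)"
    using \<phi> insert.prems unfolding An_linear_form_def by auto
  ultimately show ?case
    using \<phi> insert unfolding An_linear_form_def by simp
qed

lemma Pn_linear_form_expansion: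
  assumes "cl_mult n e e = e" "An_linear_form n (Pn n e) \<phi>" "G \<in> Pn n e"
  shows "\<phi> G = (\<lambda>x. \<Sum>S\<in>Pow {..n}. G x S * \<phi> (Pn_generator n e S) x)"
proof -
  have "\<phi> G = \<phi> (\<lambda>x U. \<Sum>S\<in>Pow {..n}. G x S * Pn_generator n e S x U)"
    using Pn_expansion[OF assms(1,3)] by simp
  also have "\<dots> = (\<lambda>x. \<Sum>S\<in>Pow {..n}. G x S * \<phi> (Pn_generator n e S) x)"
    using Pn_coordinate[OF assms(3)] Pn_generator_in_Pn
    by (intro An_linear_form_sum[OF assms(2)]) (auto simp del: Pow_iff)
  finally show ?thesis .
qed

lemma Pn_representer:
  assumes "\<And>S. S \<in> Pow {..n} \<Longrightarrow> c S \<in> An n"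
  shows "\<exists>F\<in>Pn n e. \<forall>G\<in>Pn n e. \<forall>x. cl_inner n (F x) (G x) = (\<Sum>S\<in>Pow {..n}. c S x * G x S)"
proof -
  obtain \<pi> where \<pi>: "\<And>S. \<pi> S \<in> cl_E n e" "\<And>S g. g \<in> cl_E n e \<Longrightarrow> cl_inner n (\<pi> S) g = g S"
    using cl_E_coordinate_representer by metis
  define F where "F = (\<lambda>x U. \<Sum>S\<in>Pow {..n}. c S x * neg_proj_section n (\<pi> S) x U)"
  have "F \<in> Pn n e"
    unfolding F_def using assms \<pi>(1) by (intro Pn_sum) (auto intro: neg_proj_section_in_Pn)
  moreover have "cl_inner n (F x) (G x) = (\<Sum>S\<in>Pow {..n}. c S x * G x S)"
    if G: "G \<in> Pn n e" for G x
  proof (cases "x \<in> sphere_pts n")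
    case True
    have "cl_inner n (F x) (G x) = (\<Sum>S\<in>Pow {..n}. c S x * cl_inner n (neg_proj n x (\<pi> S)) (G x))"
      using True unfolding F_def neg_proj_section_def by (simp add: cl_inner_sum_left)
    also have "\<dots> = (\<Sum>S\<in>Pow {..n}. c S x * G x S)"
      using cl_inner_neg_proj[OF Pn_xvec_mult[OF G]] \<pi>(2)[OF Pn_in_cl_E[OF G]] by simp
    finally show ?thesis .
  next
    case False
    then show ?thesis
      using Pn_outside_sphere[OF G] by (simp add: F_def neg_proj_section_def cl_inner_def)
  qed
  ultimately show ?thesis by blast
qed

lemma Pn_beta_hat_representer:
  assumes "cl_mult n e e = e" "An_linear_form n (Pn n e) \<phi>"
  shows "\<exists>F\<in>Pn n e. \<forall>G\<in>Pn n e. beta_hat n F G = \<phi> G"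
proof -
  define c where "c S = (\<lambda>x. (1 / 2 ^ Suc n) * \<phi> (Pn_generator n e S) x)" for S
  have "c S \<in> An n" if "S \<in> Pow {..n}" for S
    unfolding c_def using assms(2) Pn_generator_in_Pn[OF that]
    by (intro An_scale) (auto simp: An_linear_form_def)
  then obtain F where F: "F \<in> Pn n e"
    and F_inner: "\<forall>G\<in>Pn n e. \<forall>x. cl_inner n (F x) (G x) = (\<Sum>S\<in>Pow {..n}. c S x * G x S)"
    using Pn_representer by blast
  have "beta_hat n F G = \<phi> G" if G: "G \<in> Pn n e" for G
  proof
    fix x
    have "beta_hat n F G x = (\<Sum>S\<in>Pow {..n}. 2 ^ Suc n * (c S x * G x S))"
      using F_inner G by (simp add: beta_hat_def cl_beta_eq sum_distrib_left)
    also have "\<dots> = (\<Sum>S\<in>Pow {..n}. G x S * \<phi> (Pn_generator n e S) x)"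
      by (intro sum.cong refl) (simp add: c_def)
    also have "\<dots> = \<phi> G x"
      by (simp add: Pn_linear_form_expansion[OF assms G])
    finally show "beta_hat n F G x = \<phi> G x" .
  qed
  with F show ?thesis by blast
qed

lemma Pn_eq_if_beta_hat_eq:
  assumes "F \<in> Pn n e" "F' \<in> Pn n e"
    and "\<And>G. G \<in> Pn n e \<Longrightarrow> beta_hat n F G = beta_hat n F' G"
  shows "F = F'"
proof (intro ext)
  fix x U
  have inner_eq: "cl_inner n (F x) (G x) = cl_inner n (F' x) (G x)" if "G \<in> Pn n e" for G
    using assms(3)[OF that] by (simp add: beta_hat_def cl_beta_eq fun_eq_iff)
  define d where "d = (\<lambda>U. F x U - F' x U)"
  have "cl_inner n d d = (cl_inner n (F x) (F x) - cl_inner n (F' x) (F x))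
      - (cl_inner n (F x) (F' x) - cl_inner n (F' x) (F' x))"
    unfolding d_def cl_inner_def by (simp add: sum_subtractf[symmetric] algebra_simps)
  also have "\<dots> = 0" using inner_eq assms(1,2) by simp
  finally have "U \<in> Pow {..n} \<Longrightarrow> F x U = F' x U"
    unfolding cl_inner_self_eq_0_iff d_def by auto
  moreover have "F x \<in> cl_elems n" "F' x \<in> cl_elems n"
    using cl_E_in_cl_elems[OF Pn_in_cl_E[OF assms(1)]] cl_E_in_cl_elems[OF Pn_in_cl_E[OF assms(2)]]
    by blast+
  then have "U \<notin> Pow {..n} \<Longrightarrow> F x U = F' x U"
    unfolding cl_elems_def by simp
  ultimately show "F x U = F' x U" by blast
qed

lemma Pn_nondegenerate:
  assumes "cl_mult n e e = e"
  shows "nondegenerate_on n (Pn n e) (beta_hat n)"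
  unfolding nondegenerate_on_def
proof (intro allI impI)
  fix \<phi> assume "An_linear_form n (Pn n e) \<phi>"
  then obtain F where F: "F \<in> Pn n e" "\<forall>G\<in>Pn n e. beta_hat n F G = \<phi> G"
    using Pn_beta_hat_representer[OF assms] by blast
  show "\<exists>!F. F \<in> Pn n e \<and> (\<forall>G\<in>Pn n e. beta_hat n F G = \<phi> G)"
  proof (rule ex1I[of _ F])
    show "F \<in> Pn n e \<and> (\<forall>G\<in>Pn n e. beta_hat n F G = \<phi> G)" using F by blast
  next
    fix F' assume "F' \<in> Pn n e \<and> (\<forall>G\<in>Pn n e. beta_hat n F' G = \<phi> G)"
    with F show "F' = F" by (intro Pn_eq_if_beta_hat_eq) auto
  qed
qed

theorem mainTheorem3:
  fixes n :: nat and e :: cl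
  assumes "n \<ge> 1"
    and "primitive_idempotent n e"
  shows "fg_projective n e (Pn n e) \<and> nondegenerate_on n (Pn n e) (beta_hat n)"
proof -
  have "cl_mult n e e = e"
    using assms(2) unfolding primitive_idempotent_def cl_idempotent_def by blast
  then show ?thesis using Pn_fg_projective Pn_nondegenerate by blast
qed

end
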